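(* Let $\alpha_1,\alpha_2\in\mathbb{R}\setminus\{0\}$, $r=\alpha_2/\alpha_1$. For every $b\in\mathbb{R}$, there is no constant $C$ such that $$\|\partial_x(w_1w_2)\|_{X^{\alpha_2}_{s,b-1}}\le C\|w_1\|_{X^{\alpha_1}_{s,b}}\|w_2\|_{X^{\alpha_1}_{s,b}}$$ holds for all admissible $w_1,w_2$, in each of the following situations: (a) $r<\frac14$, $s<-\frac12$ (all $w_1,w_2\in X^{\alpha_1}_{s,b}$); (b) $r=1$, $s<-\frac12$, even when $w_1,w_2$ are restricted by $\hat w_1(0,\cdot)=\hat w_2(0,\cdot)=0$; (c) $r=1$, any $s\in\mathbb{R}$, when the restriction $\hat w_1(0,\cdot)=0$ or the restriction $\hat w_2(0,\cdot)=0$ is not imposed; (d) $r\in[\frac14,\infty)\setminus\{1\}$, $s<s_r$.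
   Context: On $\mathbb{T}=\mathbb{R}/(2\pi\mathbb{Z})$: $\hat w(k,\tau)=\int_\mathbb{R}\int_0^{2\pi}e^{-i(\tau t+kx)}w(x,t)\,dx\,dt$, $k\in\mathbb{Z}$; $\langle\cdot\rangle=1+|\cdot|$; $X^{\alpha}_{s,b}$ is the completion of Schwartz functions under $\|w\|=\|\langle k\rangle^s\langle\tau-\alpha k^3\rangle^b\hat w(k,\tau)\|_{L^2(\mathbb{Z}\times\mathbb{R})}$. Irrationality exponent $\mu(\rho)=\sup\{\mu:0<|\rho-m/n|<|n|^{-\mu}$ for infinitely many $(m,n)\in\mathbb{Z}\times(\mathbb{Z}\setminus\{0\})\}$; for $r\ge\frac14$, $\sigma_r=\mu(\sqrt{12r-3})$, $s_r=1$ if $\sigma_r=1$ or $\sigma_r\ge3$, $s_r=(\sigma_r-1)/2$ if $2\le\sigma_r<3$. *)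

theory Defs
  imports "HOL-Analysis.Analysis"
begin

definition jbr :: "real \<Rightarrow> real" where
  "jbr x = 1 + \<bar>x\<bar>"

text \<open>Functions on the Fourier side: F k tau stands for the space-time Fourier
  transform hat w(k,tau), k integer, tau real.\<close>

definition Xnorm :: "real \<Rightarrow> real \<Rightarrow> real \<Rightarrow> (int \<Rightarrow> real \<Rightarrow> complex) \<Rightarrow> real" where
  "Xnorm \<alpha> s b F = sqrt (enn2real
     (\<integral>\<^sup>+ k. (\<integral>\<^sup>+ \<tau>. ennreal ((jbr (real_of_int k) powr s
          * jbr (\<tau> - \<alpha> * (real_of_int k) ^ 3) powr b * cmod (F k \<tau>))\<^sup>2) \<partial>lborel)
      \<partial>count_space UNIV))"

definition smooth_fun :: "(real \<Rightarrow> complex) \<Rightarrow> bool" where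
  "smooth_fun f \<longleftrightarrow> (\<exists>g :: nat \<Rightarrow> real \<Rightarrow> complex. g 0 = f \<and>
      (\<forall>n x. (g n has_vector_derivative g (Suc n) x) (at x)))"

text \<open>Test functions (Fourier transforms of functions which are trigonometric
  polynomials in x and Schwartz in t): finitely many nonzero modes k, each mode
  smooth with compact support in tau.  These are dense in every X^alpha_{s,b}.\<close>
definition test_fn :: "(int \<Rightarrow> real \<Rightarrow> complex) \<Rightarrow> bool" where
  "test_fn F \<longleftrightarrow> finite {k. F k \<noteq> (\<lambda>_. 0)} \<and>
      (\<forall>k. smooth_fun (F k) \<and> bounded {\<tau>. F k \<tau> \<noteq> 0})"

text \<open>Fourier transform of d/dx (w1 w2), with the transform convention
  hat w(k,tau) = int int e^{-i(tau t + k x)} w dx dt, so that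
  hat (w1 w2) = (2 pi)^{-2} sum_{k1} int hat w1(k1,tau1) hat w2(k-k1,tau-tau1) dtau1.\<close>
definition dx_prod :: "(int \<Rightarrow> real \<Rightarrow> complex) \<Rightarrow> (int \<Rightarrow> real \<Rightarrow> complex) \<Rightarrow> int \<Rightarrow> real \<Rightarrow> complex" where
  "dx_prod F G = (\<lambda>k \<tau>. \<i> * of_int k * complex_of_real (1 / (4 * pi\<^sup>2)) *
      infsum (\<lambda>k1. \<integral> \<tau>1. F k1 \<tau>1 * G (k - k1) (\<tau> - \<tau>1) \<partial>lborel) UNIV)"

definition bilinear_est ::
  "real \<Rightarrow> real \<Rightarrow> real \<Rightarrow> real \<Rightarrow> ((int \<Rightarrow> real \<Rightarrow> complex) \<Rightarrow> bool)
     \<Rightarrow> ((int \<Rightarrow> real \<Rightarrow> complex) \<Rightarrow> bool) \<Rightarrow> bool" where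
  "bilinear_est \<alpha>1 \<alpha>2 s b P1 P2 \<longleftrightarrow> (\<exists>C::real. \<forall>F G. test_fn F \<longrightarrow> test_fn G \<longrightarrow>
      P1 F \<longrightarrow> P2 G \<longrightarrow>
      Xnorm \<alpha>2 s (b - 1) (dx_prod F G) \<le> C * Xnorm \<alpha>1 s b F * Xnorm \<alpha>1 s b G)"

definition irr_exp :: "real \<Rightarrow> ereal" where
  "irr_exp \<rho> = Sup {ereal \<mu> | \<mu>. infinite {(m :: int, n :: int). n \<noteq> 0 \<and>
      0 < \<bar>\<rho> - real_of_int m / real_of_int n\<bar> \<and>
      \<bar>\<rho> - real_of_int m / real_of_int n\<bar> < \<bar>real_of_int n\<bar> powr (- \<mu>)}}"

definition sigma_r :: "real \<Rightarrow> ereal" where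
  "sigma_r r = irr_exp (sqrt (12 * r - 3))"

definition s_r :: "real \<Rightarrow> real" where
  "s_r r = (if sigma_r r = 1 \<or> sigma_r r \<ge> 3 then 1
            else if 2 \<le> sigma_r r \<and> sigma_r r < 3 then (real_of_ereal (sigma_r r) - 1) / 2
            else undefined)"

end

(* Test the estimate on functions whose Fourier transforms are bumps at a single mode k_i,
   supported in a unit tau-interval near the dispersion curve tau = alpha1 k_i^3.  The product
   lives on the mode k = k1 + k2, at distance D = alpha1 (k1^3 + k2^3) - alpha2 k^3 from the
   curve tau = alpha2 k^3; moving D onto the output or onto one input, whichever the sign of
   b - 1/2 favours, the estimate forces
     |k| <k>^s <k1>^(-s) <k2>^(-s) <D>^(-1/2)
   to stay bounded.  It does not: for s < -1/2 along k1 = n, k2 = 1 - n (where D = O(n^2));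
   for r = 1 as soon as one mode is 0 (then D = 0); and for r >= 1/4, r /= 1 along
   k1,2 = 3n +- m, where D = 18 alpha1 n (m - rho n)(m + rho n) with rho = sqrt (12 r - 3), so
   that D = O(n^(3 - mu)) when |m - rho n| <= n^(1 - mu); by definition of the irrationality
   exponent such m/n exist for every mu < sigma_r, and for all mu <= 3 when rho is rational. *)

theory Submission
  imports Defs "HOL-Computational_Algebra.Polynomial" "HOL-Analysis.Kronecker_Approximation_Theorem"
begin

section \<open>Smooth bump functions\<close>

definition smooth_real :: "(real \<Rightarrow> real) \<Rightarrow> bool" where
  "smooth_real f \<longleftrightarrow> (\<exists>g :: nat \<Rightarrow> real \<Rightarrow> real. g 0 = f \<and>
      (\<forall>n x. (g n has_real_derivative g (Suc n) x) (at x)))"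

lemma smooth_real_affine:
  assumes "smooth_real f"
  shows "smooth_real (\<lambda>x. f (c + d * x))"
proof -
  obtain g where g: "g 0 = f" "\<And>n x. (g n has_real_derivative g (Suc n) x) (at x)"
    using assms unfolding smooth_real_def by blast
  define h where "h n x = d ^ n * g n (c + d * x)" for n x
  have "(h n has_real_derivative h (Suc n) x) (at x)" for n x
  proof -
    have "((\<lambda>x. d ^ n * g n (c + d * x)) has_real_derivative d ^ n * (g (Suc n) (c + d * x) * d)) (at x)"
      by (intro DERIV_cmult DERIV_chain2[OF g(2)]) (auto intro!: derivative_eq_intros)
    then show ?thesis unfolding h_def by (simp add: mult_ac)
  qed
  moreover have "h 0 = (\<lambda>x. f (c + d * x))" by (simp add: h_def g fun_eq_iff)
  ultimately show ?thesis unfolding smooth_real_def by blast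
qed

lemma binomial_Suc_left: "Suc n choose k = (n choose k) + (if k = 0 then 0 else n choose (k - 1))"
  by (cases k) auto

lemma smooth_real_mult:
  assumes "smooth_real f" "smooth_real g"
  shows "smooth_real (\<lambda>x. f x * g x)"
proof -
  obtain F where F: "F 0 = f" "\<And>n x. (F n has_real_derivative F (Suc n) x) (at x)"
    using assms(1) unfolding smooth_real_def by blast
  obtain G where G: "G 0 = g" "\<And>n x. (G n has_real_derivative G (Suc n) x) (at x)"
    using assms(2) unfolding smooth_real_def by blast
  define H where "H n x = (\<Sum>i = 0..n. of_nat (n choose i) * F i x * G (n - i) x)" for n x
  have "(H n has_real_derivative H (Suc n) x) (at x)" for n x
  proof -
    have "(H n has_real_derivative (\<Sum>i = 0..n.
             of_nat (n choose i) * (F (Suc i) x * G (n - i) x + G (Suc (n - i)) x * F i x))) (at x)"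
      unfolding H_def
      by (rule DERIV_sum, rule DERIV_cong, rule DERIV_mult[OF DERIV_cmult[OF F(2)] G(2)])
        (simp add: algebra_simps)
    moreover have "(\<Sum>i = 0..n.
             of_nat (n choose i) * (F (Suc i) x * G (n - i) x + G (Suc (n - i)) x * F i x)) =
          G 0 x * F (Suc n) x + (\<Sum>i = 0..n. F i x * (of_nat (Suc n choose i) * G (Suc n - i) x))"
      apply (simp add: binomial_Suc_left algebra_simps sum.distrib)
      apply (subst (4) sum_Suc_reindex)
      apply (auto simp: algebra_simps Suc_diff_le intro: sum.cong)
      done
    moreover have "H (Suc n) x =
        G 0 x * F (Suc n) x + (\<Sum>i = 0..n. F i x * (of_nat (Suc n choose i) * G (Suc n - i) x))"
      unfolding H_def by (simp add: sum.atLeast0_atMost_Suc algebra_simps)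
    ultimately show ?thesis by simp
  qed
  moreover have "H 0 = (\<lambda>x. f x * g x)" by (simp add: H_def F G fun_eq_iff)
  ultimately show ?thesis unfolding smooth_real_def by blast
qed

lemma smooth_fun_of_real:
  assumes "smooth_real f"
  shows "smooth_fun (\<lambda>x. complex_of_real (f x))"
proof -
  obtain F where F: "F 0 = f" "\<And>n x. (F n has_real_derivative F (Suc n) x) (at x)"
    using assms unfolding smooth_real_def by blast
  have "((\<lambda>x. complex_of_real (F n x)) has_vector_derivative complex_of_real (F (Suc n) x)) (at x)"
    for n x by (rule has_vector_derivative_of_real[OF F(2)])
  then show ?thesis
    unfolding smooth_fun_def using F(1) by (intro exI[of _ "\<lambda>n x. complex_of_real (F n x)"]) auto
qed

lemma smooth_fun_zero: "smooth_fun (\<lambda>_. 0)"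
  unfolding smooth_fun_def by (rule exI[of _ "\<lambda>_ _. 0"]) simp

text \<open>The n-th derivative of x \<mapsto> exp (-1/x) on x > 0 is P_n(1/x) exp (-1/x).\<close>
fun flat_poly :: "nat \<Rightarrow> real poly" where
  "flat_poly 0 = 1"
| "flat_poly (Suc n) = [:0, 0, 1:] * (flat_poly n - pderiv (flat_poly n))"

definition flat :: "nat \<Rightarrow> real \<Rightarrow> real" where
  "flat n x = (if x > 0 then poly (flat_poly n) (1 / x) * exp (- 1 / x) else 0)"

lemma poly_over_exp_tendsto_0: "((\<lambda>u. poly q u / exp u) \<longlongrightarrow> (0 :: real)) at_top"
proof -
  have "((\<lambda>u. \<Sum>i\<le>degree q. coeff q i * (u ^ i / exp u)) \<longlongrightarrow> (\<Sum>i\<le>degree q. coeff q i * 0)) at_top"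
    by (intro tendsto_sum tendsto_mult tendsto_const tendsto_power_div_exp_0)
  then show ?thesis
    by (simp add: poly_altdef sum_divide_distrib)
qed

lemma flat_has_derivative: "(flat n has_real_derivative flat (Suc n) x) (at x)"
proof -
  consider "x > 0" | "x < 0" | "x = 0" by linarith
  then show ?thesis
  proof cases
    case 1
    have "((\<lambda>x. poly (flat_poly n) (1 / x) * exp (- 1 / x)) has_real_derivative
          poly (pderiv (flat_poly n)) (1 / x) * (- 1 / x^2) * exp (- 1 / x)
          + poly (flat_poly n) (1 / x) * (exp (- 1 / x) * (1 / x^2))) (at x)"
      using 1 by (auto intro!: derivative_eq_intros DERIV_chain2[OF poly_DERIV]
          simp: power2_eq_square field_simps)
    moreover have "poly (pderiv (flat_poly n)) (1 / x) * (- 1 / x^2) * exp (- 1 / x)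
          + poly (flat_poly n) (1 / x) * (exp (- 1 / x) * (1 / x^2)) = flat (Suc n) x"
      using 1 by (simp add: flat_def algebra_simps power2_eq_square divide_simps)
    ultimately show ?thesis
      by (rule_tac has_field_derivative_transform_within_open[where S = "{0<..}"])
        (use 1 in \<open>auto simp: flat_def\<close>)
  next
    case 2
    have "((\<lambda>x. 0) has_real_derivative flat (Suc n) x) (at x)"
      using 2 by (simp add: flat_def)
    then show ?thesis
      by (rule has_field_derivative_transform_within_open[where S = "{..<0}"])
        (use 2 in \<open>auto simp: flat_def\<close>)
  next
    case 3
    have "((\<lambda>y. poly (pCons 0 (flat_poly n)) (inverse y) / exp (inverse y)) \<longlongrightarrow> 0) (at_right (0 :: real))"
      by (rule filterlim_compose[OF poly_over_exp_tendsto_0 filterlim_inverse_at_top_right])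
    moreover have "eventually (\<lambda>y. poly (pCons 0 (flat_poly n)) (inverse y) / exp (inverse y)
        = (flat n y - flat n 0) / (y - 0)) (at_right (0 :: real))"
      by (auto simp: eventually_at_right_less flat_def exp_minus field_simps
          eventually_at_right_field intro!: exI[of _ 1])
    ultimately have "((\<lambda>y. (flat n y - flat n 0) / (y - 0)) \<longlongrightarrow> 0) (at_right 0)"
      by (rule Lim_transform_eventually)
    moreover have "eventually (\<lambda>y. 0 = (flat n y - flat n 0) / (y - 0)) (at_left (0 :: real))"
      by (auto simp: flat_def eventually_at_left_field intro!: exI[of _ "-1"])
    then have "((\<lambda>y. (flat n y - flat n 0) / (y - 0)) \<longlongrightarrow> 0) (at_left 0)"
      by (rule Lim_transform_eventually[OF tendsto_const])
    ultimately show ?thesis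
      using 3 by (simp add: has_field_derivative_iff flat_def filterlim_at_split)
  qed
qed

lemma smooth_real_flat: "smooth_real (flat 0)"
  unfolding smooth_real_def using flat_has_derivative by blast

definition bump :: "real \<Rightarrow> real" where
  "bump x = flat 0 x * flat 0 (1 - x)"

lemma smooth_real_bump: "smooth_real bump"
proof -
  have "smooth_real (\<lambda>x. flat 0 (0 + 1 * x) * flat 0 (1 + (-1) * x))"
    by (intro smooth_real_mult smooth_real_affine smooth_real_flat)
  then show ?thesis by (simp add: bump_def[abs_def])
qed

lemma bump_nonneg: "0 \<le> bump x"
  by (simp add: bump_def flat_def)

lemma bump_le_1: "bump x \<le> 1"
  by (auto simp: bump_def flat_def mult_le_one)

lemma bump_eq_0: "x \<le> 0 \<or> 1 \<le> x \<Longrightarrow> bump x = 0"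
  by (auto simp: bump_def flat_def)

lemma bump_ge:
  assumes "1/4 \<le> x" "x \<le> 3/4"
  shows "exp (-8) \<le> bump x"
proof -
  have "exp (-8) = exp (-4) * (exp (-4) :: real)" by (simp flip: exp_add)
  also have "\<dots> \<le> exp (- 1 / x) * exp (- 1 / (1 - x))"
    using assms by (intro mult_mono) (auto simp: field_simps)
  finally show ?thesis using assms by (simp add: bump_def flat_def)
qed

lemma continuous_on_bump [continuous_intros]:
  "continuous_on S f \<Longrightarrow> continuous_on S (\<lambda>x. bump (f x))"
proof -
  obtain F where "F 0 = bump" "\<And>n x. (F n has_real_derivative F (Suc n) x) (at x)"
    using smooth_real_bump unfolding smooth_real_def by blast
  then have "continuous_on UNIV bump"
    by (metis DERIV_isCont continuous_at_imp_continuous_on)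
  then show "continuous_on S f \<Longrightarrow> continuous_on S (\<lambda>x. bump (f x))"
    using continuous_on_compose2 by blast
qed

section \<open>Single-mode test functions\<close>

definition bump_mode :: "int \<Rightarrow> real \<Rightarrow> int \<Rightarrow> real \<Rightarrow> complex" where
  "bump_mode k0 a = (\<lambda>k \<tau>. if k = k0 then complex_of_real (bump (\<tau> - a)) else 0)"

lemma test_fn_bump_mode: "test_fn (bump_mode k0 a)"
proof -
  have "finite {k. bump_mode k0 a k \<noteq> (\<lambda>_. 0)}"
    by (rule finite_subset[of _ "{k0}"]) (auto simp: bump_mode_def)
  moreover have "smooth_fun (bump_mode k0 a k)" for k
  proof (cases "k = k0")
    case True
    have "smooth_real (\<lambda>x. bump ((-a) + 1 * x))"
      by (intro smooth_real_affine smooth_real_bump)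
    then show ?thesis
      using True smooth_fun_of_real by (simp add: bump_mode_def)
  qed (simp add: bump_mode_def smooth_fun_zero)
  moreover have "bounded {\<tau>. bump_mode k0 a k \<tau> \<noteq> 0}" for k
  proof (rule bounded_subset[OF bounded_closed_interval])
    show "{\<tau>. bump_mode k0 a k \<tau> \<noteq> 0} \<subseteq> {a..a+1}"
    proof
      fix \<tau> assume "\<tau> \<in> {\<tau>. bump_mode k0 a k \<tau> \<noteq> 0}"
      then show "\<tau> \<in> {a..a+1}"
        using bump_eq_0[of "\<tau> - a"] by (force simp: bump_mode_def split: if_splits)
    qed
  qed
  ultimately show ?thesis unfolding test_fn_def by blast
qed

lemma bump_mode_other: "k \<noteq> k0 \<Longrightarrow> bump_mode k0 a k = (\<lambda>_. 0)"
  by (simp add: bump_mode_def fun_eq_iff)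

lemma jbr_pos: "0 < jbr x"
  by (simp add: jbr_def add_pos_nonneg)

lemma jbr_neq_0 [simp]: "jbr x \<noteq> 0"
  using jbr_pos[of x] by simp

lemma jbr_ge_1: "1 \<le> jbr x"
  by (simp add: jbr_def)

lemma jbr_0 [simp]: "jbr 0 = 1"
  by (simp add: jbr_def)

lemma jbr_uminus [simp]: "jbr (- x) = jbr x"
  by (simp add: jbr_def)

lemma jbr_powr_le_shift:
  assumes "\<bar>x - c\<bar> \<le> 2"
  shows "jbr x powr p \<le> 3 powr \<bar>p\<bar> * jbr c powr p"
proof -
  have u: "jbr x \<le> 3 * jbr c" and l: "jbr c \<le> 3 * jbr x"
    using assms by (auto simp: jbr_def)
  have px: "0 < jbr x" and pc: "0 < jbr c" by (rule jbr_pos)+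
  show ?thesis
  proof (cases "p \<ge> 0")
    case True
    have "jbr x powr p \<le> (3 * jbr c) powr p" by (intro powr_mono2 True u) (use px in auto)
    also have "\<dots> = 3 powr \<bar>p\<bar> * jbr c powr p" using True pc by (simp add: powr_mult)
    finally show ?thesis .
  next
    case False
    have "(jbr c / 3) powr (-p) \<le> jbr x powr (-p)" by (intro powr_mono2) (use False pc l in auto)
    then have "inverse (jbr x powr (-p)) \<le> inverse ((jbr c / 3) powr (-p))"
      using pc by (intro le_imp_inverse_le) auto
    also have "inverse ((jbr c / 3) powr (-p)) = 3 powr \<bar>p\<bar> * jbr c powr p"
      using False pc by (simp add: powr_divide powr_minus divide_simps)
    finally show ?thesis using px by (simp add: powr_minus)
  qed
qed

lemma jbr_powr_ge_shift:
  assumes "\<bar>x - c\<bar> \<le> 2"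
  shows "3 powr (- \<bar>p\<bar>) * jbr c powr p \<le> jbr x powr p"
  using jbr_powr_le_shift[of c x p] assms by (simp add: powr_minus field_simps)

lemma nn_integral_indicator_Icc:
  fixes V c d :: real
  assumes "0 \<le> V" "c \<le> d"
  shows "(\<integral>\<^sup>+\<tau>. ennreal (V * indicator {c..d} \<tau>) \<partial>lborel) = ennreal (V * (d - c))"
proof -
  have "(\<integral>\<^sup>+\<tau>. ennreal (V * indicator {c..d} \<tau>) \<partial>lborel) = (\<integral>\<^sup>+\<tau>. ennreal V * indicator {c..d} \<tau> \<partial>lborel)"
    by (intro nn_integral_cong) (auto simp: indicator_def)
  also have "\<dots> = ennreal (V * (d - c))"
    using assms by (simp add: nn_integral_cmult_indicator ennreal_mult)
  finally show ?thesis .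
qed

lemma nn_integral_le_indicator_Icc:
  fixes g :: "real \<Rightarrow> real"
  assumes "\<And>\<tau>. g \<tau> \<le> V * indicator {c..d} \<tau>" "0 \<le> V" "c \<le> d"
  shows "(\<integral>\<^sup>+\<tau>. ennreal (g \<tau>) \<partial>lborel) \<le> ennreal (V * (d - c))"
  using nn_integral_mono[of lborel "\<lambda>\<tau>. ennreal (g \<tau>)" "\<lambda>\<tau>. ennreal (V * indicator {c..d} \<tau>)"]
    assms nn_integral_indicator_Icc[OF assms(2,3)] by (simp add: ennreal_leI)

lemma enn2real_nn_integral_le_indicator_Icc:
  fixes g :: "real \<Rightarrow> real"
  assumes "\<And>\<tau>. g \<tau> \<le> V * indicator {c..d} \<tau>" "0 \<le> V" "c \<le> d"
  shows "enn2real (\<integral>\<^sup>+\<tau>. ennreal (g \<tau>) \<partial>lborel) \<le> V * (d - c)"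
  using enn2real_mono[OF nn_integral_le_indicator_Icc[OF assms]] assms by simp

lemma enn2real_nn_integral_ge_indicator_Icc:
  fixes g :: "real \<Rightarrow> real"
  assumes "\<And>\<tau>. L * indicator {c..d} \<tau> \<le> g \<tau>" "0 \<le> L" "c \<le> d"
    and "\<And>\<tau>. g \<tau> \<le> V * indicator {c'..d'} \<tau>" "0 \<le> V" "c' \<le> d'"
  shows "L * (d - c) \<le> enn2real (\<integral>\<^sup>+\<tau>. ennreal (g \<tau>) \<partial>lborel)"
proof -
  have "ennreal (L * (d - c)) \<le> (\<integral>\<^sup>+\<tau>. ennreal (g \<tau>) \<partial>lborel)"
    using nn_integral_indicator_Icc[OF assms(2,3)] by (metis assms(1) ennreal_leI nn_integral_mono)
  moreover have "(\<integral>\<^sup>+\<tau>. ennreal (g \<tau>) \<partial>lborel) < \<infinity>"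
    using nn_integral_le_indicator_Icc[OF assms(4-6)] ennreal_less_top order_le_less_trans by fastforce
  ultimately show ?thesis
    using enn2real_mono assms by fastforce
qed

lemma Xnorm_single_mode:
  assumes "\<And>k. k \<noteq> k0 \<Longrightarrow> F k = (\<lambda>_. 0)"
  shows "Xnorm \<alpha> s b F = sqrt (enn2real (\<integral>\<^sup>+ \<tau>. ennreal ((jbr (real_of_int k0) powr s
          * jbr (\<tau> - \<alpha> * (real_of_int k0) ^ 3) powr b * cmod (F k0 \<tau>))\<^sup>2) \<partial>lborel))"
proof -
  have "(\<integral>\<^sup>+ k. (\<integral>\<^sup>+ \<tau>. ennreal ((jbr (real_of_int k) powr s
          * jbr (\<tau> - \<alpha> * (real_of_int k) ^ 3) powr b * cmod (F k \<tau>))\<^sup>2) \<partial>lborel) \<partial>count_space UNIV)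
      = (\<Sum>k\<in>{k0}. (\<integral>\<^sup>+ \<tau>. ennreal ((jbr (real_of_int k) powr s
          * jbr (\<tau> - \<alpha> * (real_of_int k) ^ 3) powr b * cmod (F k \<tau>))\<^sup>2) \<partial>lborel))"
    by (rule nn_integral_count_space') (auto simp: assms)
  then show ?thesis by (simp add: Xnorm_def)
qed

lemma Xnorm_nonneg: "0 \<le> Xnorm \<alpha> s b F"
  by (simp add: Xnorm_def)

lemma Xnorm_bump_mode_le:
  "Xnorm \<alpha> s b (bump_mode k a)
     \<le> 3 powr \<bar>b\<bar> * jbr (real_of_int k) powr s * jbr (a - \<alpha> * (real_of_int k) ^ 3) powr b"
    (is "_ \<le> ?U")
proof -
  have "Xnorm \<alpha> s b (bump_mode k a) = sqrt (enn2real (\<integral>\<^sup>+ \<tau>. ennreal ((jbr (real_of_int k) powr s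
          * jbr (\<tau> - \<alpha> * (real_of_int k) ^ 3) powr b * cmod (bump_mode k a k \<tau>))\<^sup>2) \<partial>lborel))"
    by (rule Xnorm_single_mode) (simp add: bump_mode_other)
  also have "\<dots> \<le> sqrt (?U\<^sup>2 * ((a + 1) - a))"
  proof (intro real_sqrt_le_mono enn2real_nn_integral_le_indicator_Icc)
    fix \<tau>
    show "(jbr (real_of_int k) powr s * jbr (\<tau> - \<alpha> * (real_of_int k) ^ 3) powr b
        * cmod (bump_mode k a k \<tau>))\<^sup>2 \<le> ?U\<^sup>2 * indicator {a..a+1} \<tau>"
    proof (cases "\<tau> \<in> {a..a+1}")
      case True
      have "jbr (\<tau> - \<alpha> * (real_of_int k) ^ 3) powr b \<le> 3 powr \<bar>b\<bar> * jbr (a - \<alpha> * (real_of_int k) ^ 3) powr b"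
        by (rule jbr_powr_le_shift) (use True in auto)
      then have "jbr (real_of_int k) powr s * jbr (\<tau> - \<alpha> * (real_of_int k) ^ 3) powr b
          * cmod (bump_mode k a k \<tau>) \<le> jbr (real_of_int k) powr s * (3 powr \<bar>b\<bar>
          * jbr (a - \<alpha> * (real_of_int k) ^ 3) powr b) * 1"
        by (intro mult_mono mult_left_mono) (auto simp: bump_mode_def bump_le_1 bump_nonneg)
      then show ?thesis
        using True by (simp add: power_mono mult_ac)
    next
      case False
      then have "bump (\<tau> - a) = 0" by (intro bump_eq_0) auto
      then show ?thesis by (simp add: bump_mode_def)
    qed
  qed auto
  finally show ?thesis by simp
qed

definition bump_conv :: "real \<Rightarrow> real \<Rightarrow> real \<Rightarrow> real" where
  "bump_conv a1 a2 \<tau> = (\<integral>t. bump (t - a1) * bump (\<tau> - t - a2) \<partial>lborel)"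

lemma integrable_indicator_Icc: "integrable lborel (indicator {c..d :: real} :: real \<Rightarrow> real)"
  by (rule integrable_real_indicator) (auto simp: emeasure_lborel_Icc_eq)

lemma bump_conv_integrand_le: "bump (t - a1) * bump (\<tau> - t - a2) \<le> indicator {a1..a1+1} t"
proof (cases "t \<in> {a1..a1+1}")
  case True
  then show ?thesis using bump_le_1 bump_nonneg by (simp add: mult_le_one)
next
  case False
  then have "bump (t - a1) = 0" by (intro bump_eq_0) auto
  then show ?thesis by simp
qed

lemma integrable_bump_conv_integrand: "integrable lborel (\<lambda>t. bump (t - a1) * bump (\<tau> - t - a2))"
proof (rule Bochner_Integration.integrable_bound[OF integrable_indicator_Icc[of a1 "a1+1"]])
  have "continuous_on UNIV (\<lambda>t. bump (t - a1) * bump (\<tau> - t - a2))"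
    by (intro continuous_intros)
  then show "(\<lambda>t. bump (t - a1) * bump (\<tau> - t - a2)) \<in> borel_measurable lborel"
    using borel_measurable_continuous_onI by simp
  show "AE t in lborel. norm (bump (t - a1) * bump (\<tau> - t - a2)) \<le> norm (indicator {a1..a1+1} t :: real)"
    using bump_conv_integrand_le bump_nonneg by (intro AE_I2) simp
qed

lemma bump_conv_nonneg: "0 \<le> bump_conv a1 a2 \<tau>"
  unfolding bump_conv_def by (intro integral_nonneg_AE AE_I2) (simp add: bump_nonneg)

lemma bump_conv_le_1: "bump_conv a1 a2 \<tau> \<le> 1"
proof -
  have "bump_conv a1 a2 \<tau> \<le> (\<integral>t. indicator {a1..a1+1} t \<partial>lborel)"
    unfolding bump_conv_def
    by (rule integral_mono[OF integrable_bump_conv_integrand integrable_indicator_Icc bump_conv_integrand_le])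
  then show ?thesis by simp
qed

lemma bump_conv_eq_0:
  assumes "\<tau> \<notin> {a1+a2..a1+a2+2}"
  shows "bump_conv a1 a2 \<tau> = 0"
proof -
  have "bump (t - a1) * bump (\<tau> - t - a2) = 0" for t
  proof (rule ccontr)
    assume "bump (t - a1) * bump (\<tau> - t - a2) \<noteq> 0"
    then have "0 < t - a1" "t - a1 < 1" "0 < \<tau> - t - a2" "\<tau> - t - a2 < 1"
      using bump_eq_0[of "t - a1"] bump_eq_0[of "\<tau> - t - a2"] by force+
    then show False using assms by auto
  qed
  then have "(\<lambda>t. bump (t - a1) * bump (\<tau> - t - a2)) = (\<lambda>_. 0)" by (simp add: fun_eq_iff)
  then show ?thesis by (simp add: bump_conv_def)
qed

lemma bump_conv_ge:
  assumes "\<tau> \<in> {a1+a2+9/10..a1+a2+11/10}"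
  shows "3/10 * exp (-16) \<le> bump_conv a1 a2 \<tau>"
proof -
  have "exp (-16) * indicator {a1+35/100..a1+65/100} t \<le> bump (t - a1) * bump (\<tau> - t - a2)" for t
  proof (cases "t \<in> {a1+35/100..a1+65/100}")
    case True
    have "exp (-16) = exp (-8) * (exp (-8) :: real)" by (simp flip: exp_add)
    also have "\<dots> \<le> bump (t - a1) * bump (\<tau> - t - a2)"
      by (intro mult_mono bump_ge) (use True assms bump_nonneg in auto)
    finally show ?thesis using True by simp
  qed (simp add: bump_nonneg)
  then have "(\<integral>t. exp (-16) * indicator {a1+35/100..a1+65/100} t \<partial>lborel) \<le> bump_conv a1 a2 \<tau>"
    unfolding bump_conv_def
    by (intro integral_mono[OF _ integrable_bump_conv_integrand] integrable_mult_right
        integrable_indicator_Icc)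
  then show ?thesis by (simp add: measure_def emeasure_lborel_Icc_eq)
qed

lemma infsum_eq_single:
  assumes "\<And>x. x \<noteq> a \<Longrightarrow> f x = 0"
  shows "infsum f UNIV = f a"
  using infsum_cong_neutral[of "{a}" UNIV f f] assms by simp

lemma dx_prod_bump_mode:
  "dx_prod (bump_mode k1 a1) (bump_mode k2 a2) k \<tau> =
     (if k = k1 + k2 then \<i> * complex_of_real (real_of_int k / (4 * pi\<^sup>2) * bump_conv a1 a2 \<tau>)
      else 0)"
proof -
  have "infsum (\<lambda>k1'. \<integral>\<tau>1. bump_mode k1 a1 k1' \<tau>1 * bump_mode k2 a2 (k - k1') (\<tau> - \<tau>1) \<partial>lborel) UNIV
      = (\<integral>\<tau>1. bump_mode k1 a1 k1 \<tau>1 * bump_mode k2 a2 (k - k1) (\<tau> - \<tau>1) \<partial>lborel)"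
    by (rule infsum_eq_single) (simp add: bump_mode_def)
  also have "\<dots> = (if k = k1 + k2 then complex_of_real (bump_conv a1 a2 \<tau>) else 0)"
    unfolding bump_conv_def by (simp add: bump_mode_def flip: integral_complex_of_real)
  finally show ?thesis
    by (simp add: dx_prod_def)
qed

lemma norm_dx_prod_bump_mode:
  "cmod (dx_prod (bump_mode k1 a1) (bump_mode k2 a2) (k1 + k2) \<tau>) =
     \<bar>real_of_int (k1 + k2)\<bar> / (4 * pi\<^sup>2) * bump_conv a1 a2 \<tau>"
  unfolding dx_prod_bump_mode
  by (simp only: simp_thms(6) if_True norm_mult norm_of_real abs_mult) (simp add: bump_conv_nonneg)

lemma weighted_bump_conv_le:
  assumes "0 \<le> P"
  shows "(P * (jbr (\<tau> - e) powr p * bump_conv a1 a2 \<tau>))\<^sup>2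
           \<le> (P * (3 powr \<bar>p\<bar> * jbr (a1 + a2 - e) powr p))\<^sup>2 * indicator {a1+a2..a1+a2+2} \<tau>"
proof (cases "\<tau> \<in> {a1+a2..a1+a2+2}")
  case True
  have "jbr (\<tau> - e) powr p * bump_conv a1 a2 \<tau> \<le> 3 powr \<bar>p\<bar> * jbr (a1 + a2 - e) powr p * 1"
    using True by (intro mult_mono jbr_powr_le_shift bump_conv_le_1) (auto simp: bump_conv_nonneg)
  then have "P * (jbr (\<tau> - e) powr p * bump_conv a1 a2 \<tau>) \<le> P * (3 powr \<bar>p\<bar> * jbr (a1 + a2 - e) powr p)"
    using assms by (simp add: mult_left_mono)
  then show ?thesis
    using True assms by (simp add: power_mono bump_conv_nonneg)
qed (simp add: bump_conv_eq_0)

lemma weighted_bump_conv_ge: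
  assumes "0 \<le> P"
  shows "(P * (3 powr (- \<bar>p\<bar>) * jbr (a1 + a2 - e) powr p * (3/10 * exp (-16))))\<^sup>2
           * indicator {a1+a2+9/10..a1+a2+11/10} \<tau>
         \<le> (P * (jbr (\<tau> - e) powr p * bump_conv a1 a2 \<tau>))\<^sup>2"
proof (cases "\<tau> \<in> {a1+a2+9/10..a1+a2+11/10}")
  case True
  have "3 powr (- \<bar>p\<bar>) * jbr (a1 + a2 - e) powr p * (3/10 * exp (-16))
      \<le> jbr (\<tau> - e) powr p * bump_conv a1 a2 \<tau>"
    using True by (intro mult_mono jbr_powr_ge_shift bump_conv_ge) auto
  then have "P * (3 powr (- \<bar>p\<bar>) * jbr (a1 + a2 - e) powr p * (3/10 * exp (-16)))
      \<le> P * (jbr (\<tau> - e) powr p * bump_conv a1 a2 \<tau>)"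
    using assms by (rule mult_left_mono)
  then show ?thesis
    using True assms by (simp add: power_mono)
qed simp

lemma Xnorm_dx_prod_bump_mode_ge:
  fixes k1 k2 :: int
  defines "k \<equiv> real_of_int (k1 + k2)"
  shows "sqrt (1/5) * 3 powr (- \<bar>b - 1\<bar>) * (3/10 * exp (-16)) / (4 * pi\<^sup>2)
           * \<bar>k\<bar> * jbr k powr s * jbr (a1 + a2 - \<alpha> * k ^ 3) powr (b - 1)
         \<le> Xnorm \<alpha> s (b - 1) (dx_prod (bump_mode k1 a1) (bump_mode k2 a2))"
proof -
  define P where "P = jbr k powr s * \<bar>k\<bar> / (4 * pi\<^sup>2)"
  define g where "g \<tau> = (P * (jbr (\<tau> - \<alpha> * k ^ 3) powr (b - 1) * bump_conv a1 a2 \<tau>))\<^sup>2" for \<tau>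
  define lo where "lo = P * (3 powr (- \<bar>b - 1\<bar>) * jbr (a1 + a2 - \<alpha> * k ^ 3) powr (b - 1)
                         * (3/10 * exp (-16)))"
  have P: "0 \<le> P" and lo: "0 \<le> lo" by (simp_all add: P_def lo_def)
  have "Xnorm \<alpha> s (b - 1) (dx_prod (bump_mode k1 a1) (bump_mode k2 a2))
      = sqrt (enn2real (\<integral>\<^sup>+\<tau>. ennreal ((jbr k powr s * jbr (\<tau> - \<alpha> * k ^ 3) powr (b - 1)
          * cmod (dx_prod (bump_mode k1 a1) (bump_mode k2 a2) (k1 + k2) \<tau>))\<^sup>2) \<partial>lborel))"
    unfolding k_def by (rule Xnorm_single_mode) (simp add: dx_prod_bump_mode fun_eq_iff)
  also have "\<dots> = sqrt (enn2real (\<integral>\<^sup>+\<tau>. ennreal (g \<tau>) \<partial>lborel))"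
    by (simp only: norm_dx_prod_bump_mode g_def P_def k_def mult_ac times_divide_eq_right)
  moreover have "lo\<^sup>2 * ((a1+a2+11/10) - (a1+a2+9/10)) \<le> enn2real (\<integral>\<^sup>+\<tau>. ennreal (g \<tau>) \<partial>lborel)"
  proof (rule enn2real_nn_integral_ge_indicator_Icc)
    show "lo\<^sup>2 * indicator {a1+a2+9/10..a1+a2+11/10} \<tau> \<le> g \<tau>" for \<tau>
      unfolding g_def lo_def by (rule weighted_bump_conv_ge[OF P])
    show "g \<tau> \<le> (P * (3 powr \<bar>b - 1\<bar> * jbr (a1 + a2 - \<alpha> * k ^ 3) powr (b - 1)))\<^sup>2
        * indicator {a1+a2..a1+a2+2} \<tau>" for \<tau>
      unfolding g_def by (rule weighted_bump_conv_le[OF P])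
  qed auto
  ultimately have "sqrt (lo\<^sup>2 * (1/5)) \<le> Xnorm \<alpha> s (b - 1) (dx_prod (bump_mode k1 a1) (bump_mode k2 a2))"
    by (simp add: real_sqrt_le_mono)
  moreover have "sqrt (lo\<^sup>2 * (1/5)) = lo * sqrt (1/5)"
    using lo by (simp only: real_sqrt_mult real_sqrt_abs abs_of_nonneg)
  ultimately show ?thesis
    by (simp add: lo_def P_def mult_ac)
qed

section \<open>Testing the estimate\<close>

text \<open>The mismatch \<tau> - \<alpha>2 k^3 of the product of waves at the resonant frequencies
  \<tau>1 = \<alpha>1 k1^3 and \<tau>2 = \<alpha>1 k2^3.\<close>
definition resonance :: "real \<Rightarrow> real \<Rightarrow> int \<Rightarrow> int \<Rightarrow> real" where
  "resonance \<alpha>1 \<alpha>2 k1 k2 =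
     \<alpha>1 * (real_of_int k1 ^ 3 + real_of_int k2 ^ 3) - \<alpha>2 * real_of_int (k1 + k2) ^ 3"

definition bilinear_ratio :: "real \<Rightarrow> real \<Rightarrow> real \<Rightarrow> int \<Rightarrow> int \<Rightarrow> real" where
  "bilinear_ratio \<alpha>1 \<alpha>2 s k1 k2 =
     \<bar>real_of_int (k1 + k2)\<bar> * jbr (real_of_int (k1 + k2)) powr s
     * jbr (real_of_int k1) powr (-s) * jbr (real_of_int k2) powr (-s)
     * jbr (resonance \<alpha>1 \<alpha>2 k1 k2) powr (-1/2)"

text \<open>Put the mismatch D either on the output (t = 0) or on the second input (t = -D),
  whichever costs less for the given b.\<close>
lemma ex_shift_jbr_powr_ge: "\<exists>t. jbr D powr (-1/2) \<le> jbr (D + t) powr (b - 1) * jbr t powr (-b)"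
proof (cases "1/2 \<le> b")
  case True
  then have "jbr D powr (-1/2) \<le> jbr (D + 0) powr (b - 1) * jbr 0 powr (-b)"
    using jbr_ge_1 by (simp add: powr_mono)
  then show ?thesis by blast
next
  case False
  then have "jbr D powr (-1/2) \<le> jbr (D + - D) powr (b - 1) * jbr (- D) powr (-b)"
    using jbr_ge_1 by (simp add: powr_mono)
  then show ?thesis by blast
qed

text \<open>Test the estimate on bumps at the modes k1, k2, sitting on the dispersion curve
  \<tau> = \<alpha>1 k^3 except for a shift t of the second one.\<close>
lemma bilinear_est_imp_ratio_bounded:
  assumes "bilinear_est \<alpha>1 \<alpha>2 s b P1 P2"
  shows "\<exists>M. \<forall>k1 k2. (\<forall>a. P1 (bump_mode k1 a)) \<longrightarrow> (\<forall>a. P2 (bump_mode k2 a)) \<longrightarrow>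
           bilinear_ratio \<alpha>1 \<alpha>2 s k1 k2 \<le> M"
proof -
  obtain C where C: "\<And>F G. test_fn F \<Longrightarrow> test_fn G \<Longrightarrow> P1 F \<Longrightarrow> P2 G \<Longrightarrow>
      Xnorm \<alpha>2 s (b - 1) (dx_prod F G) \<le> C * Xnorm \<alpha>1 s b F * Xnorm \<alpha>1 s b G"
    using assms unfolding bilinear_est_def by blast
  define L where "L = sqrt (1/5) * 3 powr (- \<bar>b - 1\<bar>) * (3/10 * exp (-16)) / (4 * pi\<^sup>2)"
  have L: "0 < L" by (simp add: L_def)
  define C' where "C' = max C 0"
  have "bilinear_ratio \<alpha>1 \<alpha>2 s k1 k2 \<le> C' * 9 powr \<bar>b\<bar> / L"
    if P: "\<forall>a. P1 (bump_mode k1 a)" "\<forall>a. P2 (bump_mode k2 a)" for k1 k2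
  proof -
    define D where "D = resonance \<alpha>1 \<alpha>2 k1 k2"
    obtain t where t: "jbr D powr (-1/2) \<le> jbr (D + t) powr (b - 1) * jbr t powr (-b)"
      using ex_shift_jbr_powr_ge by blast
    define a1 where "a1 = \<alpha>1 * real_of_int k1 ^ 3"
    define a2 where "a2 = \<alpha>1 * real_of_int k2 ^ 3 + t"
    define F where "F = bump_mode k1 a1"
    define G where "G = bump_mode k2 a2"
    define B where "B = \<bar>real_of_int (k1 + k2)\<bar> * jbr (real_of_int (k1 + k2)) powr s"
    define A1 where "A1 = jbr (real_of_int k1) powr s"
    define A2 where "A2 = jbr (real_of_int k2) powr s"
    have pos: "0 < A1" "0 < A2" "0 \<le> B" "0 < jbr t powr b"
      by (auto simp: A1_def A2_def B_def jbr_pos)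
    have "L * B * jbr (D + t) powr (b - 1) \<le> Xnorm \<alpha>2 s (b - 1) (dx_prod F G)"
      using Xnorm_dx_prod_bump_mode_ge[of b k1 k2 s a1 a2 \<alpha>2]
      by (simp add: L_def B_def F_def G_def D_def a1_def a2_def resonance_def algebra_simps)
    also have "\<dots> \<le> C * Xnorm \<alpha>1 s b F * Xnorm \<alpha>1 s b G"
      using P by (intro C) (auto simp: F_def G_def test_fn_bump_mode)
    also have "\<dots> \<le> C' * Xnorm \<alpha>1 s b F * Xnorm \<alpha>1 s b G"
      unfolding C'_def by (intro mult_right_mono) (auto simp: Xnorm_nonneg)
    also have "\<dots> \<le> C' * (3 powr \<bar>b\<bar> * A1) * (3 powr \<bar>b\<bar> * A2 * jbr t powr b)"
      using Xnorm_bump_mode_le[of \<alpha>1 s b k1 a1] Xnorm_bump_mode_le[of \<alpha>1 s b k2 a2]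
      by (intro mult_mono mult_left_mono)
        (auto simp: C'_def F_def G_def A1_def A2_def a1_def a2_def Xnorm_nonneg)
    also have "\<dots> = C' * 9 powr \<bar>b\<bar> * (A1 * A2 * jbr t powr b)"
      by (simp add: powr_mult[symmetric] mult_ac)
    finally have estimate:
      "B / (A1 * A2) * (jbr (D + t) powr (b - 1) * jbr t powr (-b)) \<le> C' * 9 powr \<bar>b\<bar> / L"
      using L pos by (simp add: powr_minus field_simps)
    have "bilinear_ratio \<alpha>1 \<alpha>2 s k1 k2 = B / (A1 * A2) * jbr D powr (-1/2)"
      by (simp add: bilinear_ratio_def B_def A1_def A2_def D_def powr_minus field_simps)
    also have "\<dots> \<le> B / (A1 * A2) * (jbr (D + t) powr (b - 1) * jbr t powr (-b))"
      using t pos by (intro mult_left_mono) auto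
    finally show ?thesis
      using estimate by linarith
  qed
  then show ?thesis by blast
qed

section \<open>Unboundedness of the test ratio\<close>

lemma bilinear_ratio_zero_left: "bilinear_ratio \<alpha> \<alpha> s 0 k = \<bar>real_of_int k\<bar>"
  by (simp add: bilinear_ratio_def resonance_def powr_minus)

lemma bilinear_ratio_zero_right: "bilinear_ratio \<alpha> \<alpha> s k 0 = \<bar>real_of_int k\<bar>"
  by (simp add: bilinear_ratio_def resonance_def powr_minus)

lemma ex_gt_of_powr_lower_bound:
  fixes Q :: "'a \<Rightarrow> real"
  assumes "0 < c" "0 < e" and lower: "\<And>N::nat. \<exists>x \<ge> real N. \<exists>k\<in>S. c * x powr e \<le> Q k"
  shows "\<exists>k\<in>S. C < Q k"
proof -
  obtain N :: nat where N: "(\<bar>C\<bar> / c + 1) powr (1 / e) \<le> real N"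
    using real_arch_simple by blast
  obtain x k where x: "real N \<le> x" and k: "k \<in> S" "c * x powr e \<le> Q k"
    using lower by blast
  have "\<bar>C\<bar> / c + 1 = ((\<bar>C\<bar> / c + 1) powr (1 / e)) powr e"
    using assms by (simp add: powr_powr)
  also have "\<dots> \<le> x powr e"
    using assms N x by (intro powr_mono2) auto
  finally have "C < c * x powr e"
    using \<open>0 < c\<close> by (simp add: field_simps)
  with k show ?thesis by force
qed

lemma min_powr_mult_le_powr:
  fixes A B X t p :: real
  assumes "0 < B" "0 < t" "B * t \<le> X" "X \<le> A * t"
  shows "min (A powr p) (B powr p) * t powr p \<le> X powr p"
proof (cases "p \<ge> 0")
  case True
  have "(B * t) powr p \<le> X powr p"
    by (intro powr_mono2) (use assms True in auto)
  then show ?thesis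
    using assms by (simp add: powr_mult) (meson min.cobounded2 mult_right_mono order_trans powr_ge_zero)
next
  case False
  have "0 < X" "0 < A"
    using assms by (smt (verit) mult_pos_pos mult_le_cancel_right)+
  then have "(A * t) powr p \<le> X powr p"
    using assms False powr_mono2[of "-p" X "A * t"] by (simp add: powr_minus)
  then show ?thesis
    using assms \<open>0 < A\<close> by (simp add: powr_mult) (meson min.cobounded1 mult_right_mono order_trans powr_ge_zero)
qed

lemma bilinear_ratio_high_high_low_ge:
  fixes n :: int and \<alpha>1 \<alpha>2 s :: real
  assumes "1 \<le> n" "s \<le> 0"
  defines "K \<equiv> 1 + 3 * \<bar>\<alpha>1\<bar> + \<bar>\<alpha>2\<bar>"
  shows "2 powr s * K powr (-1/2) * real_of_int n powr (- 2 * s - 1) \<le> bilinear_ratio \<alpha>1 \<alpha>2 s n (1 - n)"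
proof -
  define x where "x = real_of_int n"
  define D where "D = resonance \<alpha>1 \<alpha>2 n (1 - n)"
  have x: "1 \<le> x" using assms by (simp add: x_def)
  have x2: "1 \<le> x * x" using mult_mono[OF x x] x by simp
  have "D = \<alpha>1 * (3 * (x * x) - 3 * x + 1) - \<alpha>2"
    by (simp add: D_def resonance_def x_def power3_eq_cube algebra_simps)
  then have "\<bar>D\<bar> \<le> \<bar>\<alpha>1\<bar> * \<bar>3 * (x * x) - 3 * x + 1\<bar> + \<bar>\<alpha>2\<bar>"
    by (metis abs_mult abs_triangle_ineq4)
  also have "\<dots> \<le> \<bar>\<alpha>1\<bar> * (3 * (x * x)) + \<bar>\<alpha>2\<bar> * (x * x)"
  proof (intro add_mono mult_left_mono)
    show "\<bar>3 * (x * x) - 3 * x + 1\<bar> \<le> 3 * (x * x)"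
      using x mult_right_mono[OF x, of x] unfolding abs_le_iff by linarith
    show "\<bar>\<alpha>2\<bar> \<le> \<bar>\<alpha>2\<bar> * (x * x)"
      using mult_left_mono[OF x2, of "\<bar>\<alpha>2\<bar>"] by simp
  qed simp
  also have "\<dots> = K * (x * x) - x * x"
    by (simp add: K_def algebra_simps)
  finally have "jbr D \<le> K * (x * x)"
    using x2 unfolding jbr_def by linarith
  then have D: "(K * (x * x)) powr (-1/2) \<le> jbr D powr (-1/2)"
    by (intro powr_mono2') (auto simp: jbr_pos)
  have "(x * x) powr (-1/2) = x powr (-1)"
    using x by (simp add: powr_mult powr_add[symmetric])
  then have "(K * (x * x)) powr (-1/2) = K powr (-1/2) * x powr (-1)"
    using x by (simp add: K_def powr_mult)
  moreover have "- 2 * s - 1 = (-s) + (-s) + (-1)"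
    by simp
  then have "x powr (- 2 * s - 1) = x powr (-s) * x powr (-s) * x powr (-1)"
    by (simp only: powr_add)
  ultimately have "2 powr s * K powr (-1/2) * x powr (- 2 * s - 1)
      = 2 powr s * x powr (-s) * x powr (-s) * (K * (x * x)) powr (-1/2)"
    by (simp add: mult_ac)
  also have "\<dots> \<le> 2 powr s * jbr x powr (-s) * jbr (1 - x) powr (-s) * jbr D powr (-1/2)"
  proof -
    have "x powr (-s) \<le> jbr x powr (-s)"
      using assms x by (intro powr_mono2) (auto simp: jbr_def)
    moreover have "jbr (1 - x) = x"
      using x by (simp add: jbr_def)
    ultimately show ?thesis
      using D by (intro mult_mono mult_left_mono) auto
  qed
  also have "\<dots> = bilinear_ratio \<alpha>1 \<alpha>2 s n (1 - n)"
    by (simp add: bilinear_ratio_def x_def D_def jbr_def)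
  finally show ?thesis
    by (simp add: x_def)
qed

lemma bilinear_ratio_unbounded_nonzero_modes:
  assumes "s < -1/2"
  shows "\<exists>k1 k2. k1 \<noteq> 0 \<and> k2 \<noteq> 0 \<and> C < bilinear_ratio \<alpha>1 \<alpha>2 s k1 k2"
proof -
  define K where "K = 1 + 3 * \<bar>\<alpha>1\<bar> + \<bar>\<alpha>2\<bar>"
  have "\<exists>k \<in> {k. fst k \<noteq> 0 \<and> snd k \<noteq> 0}. C < bilinear_ratio \<alpha>1 \<alpha>2 s (fst k) (snd k)"
  proof (rule ex_gt_of_powr_lower_bound)
    show "0 < 2 powr s * K powr (-1/2)" "0 < - 2 * s - 1"
      using assms by (auto simp: K_def)
    fix N :: nat
    show "\<exists>x \<ge> real N. \<exists>k \<in> {k. fst k \<noteq> 0 \<and> snd k \<noteq> 0}.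
        2 powr s * K powr (-1/2) * x powr (- 2 * s - 1) \<le> bilinear_ratio \<alpha>1 \<alpha>2 s (fst k) (snd k)"
      using bilinear_ratio_high_high_low_ge[of "int N + 2" s \<alpha>1 \<alpha>2] assms
      by (intro exI[of _ "real N + 2"] conjI bexI[of _ "(int N + 2, 1 - (int N + 2))"])
        (auto simp: K_def)
  qed
  then show ?thesis by auto
qed

lemma resonance_symmetric_pair:
  fixes n m :: int and \<alpha>1 \<alpha>2 \<rho> :: real
  assumes "\<alpha>2 = \<alpha>1 * ((\<rho>\<^sup>2 + 3) / 12)"
  shows "resonance \<alpha>1 \<alpha>2 (3 * n + m) (3 * n - m)
           = 18 * \<alpha>1 * n * (m - n * \<rho>) * (m + n * \<rho>)"
  by (simp add: resonance_def assms power2_eq_square power3_eq_cube algebra_simps)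

lemma jbr_near_resonant_bounds:
  fixes x y \<rho> :: real
  assumes x: "1 \<le> x" and "0 \<le> \<rho>" and \<delta>: "\<bar>y - x * \<rho>\<bar> \<le> 1"
  defines "A \<equiv> 7 + \<rho>" and "B \<equiv> min 3 \<bar>3 - \<rho>\<bar>"
  shows "B * x \<le> jbr (6 * x) \<and> jbr (6 * x) \<le> A * x"
    and "B * x \<le> jbr (3 * x + y) \<and> jbr (3 * x + y) \<le> A * x"
    and "B * x \<le> jbr (3 * x - y) \<and> jbr (3 * x - y) \<le> A * x"
proof -
  have Bx: "B * x \<le> 3 * x" and Bx': "B * x \<le> \<bar>3 - \<rho>\<bar> * x"
    using x by (intro mult_right_mono; simp add: B_def)+
  have \<rho>x: "0 \<le> x * \<rho>" and Ax: "A * x = 7 * x + x * \<rho>"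
    using assms by (simp_all add: A_def algebra_simps)
  have y: "x * \<rho> - 1 \<le> y" "y \<le> x * \<rho> + 1"
    using \<delta> by (simp_all add: abs_le_iff)
  have "jbr (6 * x) = 1 + 6 * x" "jbr (3 * x + y) = 1 + 3 * x + y"
    using x \<rho>x y by (simp_all add: jbr_def)
  then show "B * x \<le> jbr (6 * x) \<and> jbr (6 * x) \<le> A * x"
    and "B * x \<le> jbr (3 * x + y) \<and> jbr (3 * x + y) \<le> A * x"
    using x Bx \<rho>x Ax y by linarith+
  have "\<bar>3 - \<rho>\<bar> * x = \<bar>(3 - \<rho>) * x\<bar>"
    using x by (simp add: abs_mult)
  also have "\<dots> = \<bar>(3 * x - y) + (y - x * \<rho>)\<bar>"
    by (simp add: algebra_simps)
  also have "\<dots> \<le> \<bar>3 * x - y\<bar> + 1"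
    using \<delta> abs_triangle_ineq by (smt (verit))
  moreover have "\<bar>3 * x - y\<bar> \<le> 3 * x + x * \<rho> + 1"
    using x \<rho>x y unfolding abs_le_iff by linarith
  ultimately show "B * x \<le> jbr (3 * x - y) \<and> jbr (3 * x - y) \<le> A * x"
    using x Bx' Ax unfolding jbr_def by linarith
qed

lemma jbr_resonance_symmetric_pair_le:
  fixes n m :: int and \<alpha>1 \<alpha>2 \<rho> \<mu> :: real
  assumes \<alpha>2: "\<alpha>2 = \<alpha>1 * ((\<rho>\<^sup>2 + 3) / 12)" and \<rho>: "0 \<le> \<rho>" and \<mu>: "1 \<le> \<mu>" "\<mu> \<le> 3"
    and n: "0 < n" and nm: "\<bar>m - n * \<rho>\<bar> \<le> n powr (1 - \<mu>)"
  shows "jbr (resonance \<alpha>1 \<alpha>2 (3 * n + m) (3 * n - m))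
           \<le> (1 + 18 * \<bar>\<alpha>1\<bar> * (2 * \<rho> + 1)) * n powr (3 - \<mu>)"
proof -
  define x where "x = real_of_int n"
  define y where "y = real_of_int m"
  have x: "1 \<le> x" using n by (simp add: x_def)
  have \<delta>: "\<bar>y - x * \<rho>\<bar> \<le> x powr (1 - \<mu>)" using nm by (simp add: x_def y_def)
  also have "\<dots> \<le> x powr 0" using \<mu> x by (intro powr_mono) auto
  finally have \<delta>1: "\<bar>y - x * \<rho>\<bar> \<le> 1" using x by simp
  have "\<bar>y + x * \<rho>\<bar> \<le> \<bar>y - x * \<rho>\<bar> + \<bar>2 * \<rho> * x\<bar>"
    using abs_triangle_ineq[of "y - x * \<rho>" "2 * \<rho> * x"] by (simp add: algebra_simps)
  also have "\<dots> \<le> (2 * \<rho> + 1) * x"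
    using \<delta>1 \<rho> x by (simp add: algebra_simps)
  finally have \<rho>y: "\<bar>y + x * \<rho>\<bar> \<le> (2 * \<rho> + 1) * x" .
  have "resonance \<alpha>1 \<alpha>2 (3 * n + m) (3 * n - m) = 18 * \<alpha>1 * x * (y - x * \<rho>) * (y + x * \<rho>)"
    unfolding resonance_symmetric_pair[OF \<alpha>2] by (simp add: x_def y_def)
  then have "\<bar>resonance \<alpha>1 \<alpha>2 (3 * n + m) (3 * n - m)\<bar>
      = 18 * \<bar>\<alpha>1\<bar> * x * \<bar>y - x * \<rho>\<bar> * \<bar>y + x * \<rho>\<bar>"
    using x by (simp add: abs_mult)
  also have "\<dots> \<le> 18 * \<bar>\<alpha>1\<bar> * x * x powr (1 - \<mu>) * ((2 * \<rho> + 1) * x)"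
    using x \<delta> \<rho>y by (intro mult_mono mult_left_mono) auto
  also have "\<dots> = 18 * \<bar>\<alpha>1\<bar> * (2 * \<rho> + 1) * x powr (3 - \<mu>)"
  proof -
    have "3 - \<mu> = 1 + (1 - \<mu>) + 1" by simp
    then have "x powr (3 - \<mu>) = x powr 1 * x powr (1 - \<mu>) * x powr 1"
      by (simp only: powr_add)
    then show ?thesis using x by (simp add: mult_ac)
  qed
  finally show ?thesis
    using x \<mu> ge_one_powr_ge_zero[of x "3 - \<mu>"] by (simp add: jbr_def x_def algebra_simps)
qed

text \<open>The modes 3n \<plusminus> m with m/n a good approximation of \<rho>: the brackets are all of size n,
  while the resonance is only of size n^(3-\<mu>).\<close>
lemma bilinear_ratio_near_resonant_ge:
  fixes \<alpha>1 \<alpha>2 \<rho> \<mu> s :: real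
  assumes \<alpha>2: "\<alpha>2 = \<alpha>1 * ((\<rho>\<^sup>2 + 3) / 12)" and \<rho>: "0 \<le> \<rho>" "\<rho> \<noteq> 3" and \<mu>: "1 \<le> \<mu>" "\<mu> \<le> 3"
  obtains c where "0 < c"
    and "\<And>(n::int) (m::int). 0 < n \<Longrightarrow> \<bar>m - n * \<rho>\<bar> \<le> n powr (1 - \<mu>) \<Longrightarrow>
           c * n powr ((\<mu> - 1) / 2 - s) \<le> bilinear_ratio \<alpha>1 \<alpha>2 s (3 * n + m) (3 * n - m)"
proof -
  define K where "K = 1 + 18 * \<bar>\<alpha>1\<bar> * (2 * \<rho> + 1)"
  define A where "A = 7 + \<rho>"
  define B where "B = min 3 \<bar>3 - \<rho>\<bar>"
  define cA where "cA p = min (A powr p) (B powr p)" for p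
  define c where "c = 6 * cA s * cA (-s) * cA (-s) * K powr (-1/2)"
  have K: "1 \<le> K" using \<rho> by (simp add: K_def)
  have AB: "0 < A" "0 < B" using \<rho> by (auto simp: A_def B_def)
  have cA: "0 < cA p" for p using AB by (simp add: cA_def)
  have "c * n powr ((\<mu> - 1) / 2 - s) \<le> bilinear_ratio \<alpha>1 \<alpha>2 s (3 * n + m) (3 * n - m)"
    if n: "0 < n" and nm: "\<bar>m - n * \<rho>\<bar> \<le> n powr (1 - \<mu>)" for n m :: int
  proof -
    define x where "x = real_of_int n"
    define y where "y = real_of_int m"
    define D where "D = resonance \<alpha>1 \<alpha>2 (3 * n + m) (3 * n - m)"
    have x: "1 \<le> x" using n by (simp add: x_def)
    have "\<bar>y - x * \<rho>\<bar> \<le> x powr (1 - \<mu>)" using nm by (simp add: x_def y_def)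
    also have "\<dots> \<le> x powr 0" using \<mu> x by (intro powr_mono) auto
    finally have "\<bar>y - x * \<rho>\<bar> \<le> 1" using x by simp
    note brackets = jbr_near_resonant_bounds[OF x \<rho>(1) this, folded A_def B_def]
    have D: "(K * x powr (3 - \<mu>)) powr (-1/2) \<le> jbr D powr (-1/2)"
      using jbr_resonance_symmetric_pair_le[OF \<alpha>2 \<rho>(1) \<mu> n nm]
      by (intro powr_mono2') (auto simp: jbr_pos D_def K_def x_def)
    have "(\<mu> - 1) / 2 - s = 1 + s + (-s) + (-s) + (\<mu> - 3) / 2"
      by (simp add: field_simps)
    then have xe: "x powr ((\<mu> - 1) / 2 - s)
        = x powr 1 * x powr s * x powr (-s) * x powr (-s) * x powr ((\<mu> - 3) / 2)"
      by (simp only: powr_add)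
    have "(3 - \<mu>) * (-1/2) = (\<mu> - 3) / 2"
      by (simp add: field_simps)
    then have Kx: "(K * x powr (3 - \<mu>)) powr (-1/2) = K powr (-1/2) * x powr ((\<mu> - 3) / 2)"
      using K x by (simp only: powr_mult powr_powr powr_ge_zero)
    have "c * x powr ((\<mu> - 1) / 2 - s) = 6 * x * (cA s * x powr s)
        * (cA (-s) * x powr (-s)) * (cA (-s) * x powr (-s)) * (K * x powr (3 - \<mu>)) powr (-1/2)"
      unfolding xe Kx c_def using x by (simp add: mult_ac)
    also have "\<dots> \<le> 6 * x * jbr (6 * x) powr s * jbr (3 * x + y) powr (-s)
        * jbr (3 * x - y) powr (-s) * jbr D powr (-1/2)"
    proof -
      have "cA p * x powr p \<le> jbr z powr p"
        if "B * x \<le> jbr z \<and> jbr z \<le> A * x" for p z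
        unfolding cA_def using that x by (intro min_powr_mult_le_powr[OF AB(2)]) auto
      then show ?thesis
        using x cA brackets D by (intro mult_mono mult_left_mono) (auto simp: less_imp_le)
    qed
    also have "\<dots> = bilinear_ratio \<alpha>1 \<alpha>2 s (3 * n + m) (3 * n - m)"
      using x by (simp add: bilinear_ratio_def x_def y_def D_def)
    finally show ?thesis by (simp add: x_def)
  qed
  moreover have "0 < c" using cA K by (simp add: c_def)
  ultimately show thesis using that by blast
qed

lemma bilinear_ratio_unbounded_of_approx:
  fixes \<alpha>1 \<alpha>2 \<rho> \<mu> s :: real
  assumes \<alpha>2: "\<alpha>2 = \<alpha>1 * ((\<rho>\<^sup>2 + 3) / 12)" and \<rho>: "0 \<le> \<rho>" "\<rho> \<noteq> 3" and \<mu>: "1 \<le> \<mu>" "\<mu> \<le> 3"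
    and s: "s < (\<mu> - 1) / 2"
    and approx: "\<And>N::nat. \<exists>(n::int) (m::int). int N \<le> n \<and> 0 < n \<and> \<bar>m - n * \<rho>\<bar> \<le> n powr (1 - \<mu>)"
  shows "\<exists>k1 k2. C < bilinear_ratio \<alpha>1 \<alpha>2 s k1 k2"
proof -
  obtain c where c: "0 < c" and lower: "\<And>(n::int) (m::int). 0 < n \<Longrightarrow> \<bar>m - n * \<rho>\<bar> \<le> n powr (1 - \<mu>) \<Longrightarrow>
      c * n powr ((\<mu> - 1) / 2 - s) \<le> bilinear_ratio \<alpha>1 \<alpha>2 s (3 * n + m) (3 * n - m)"
    using bilinear_ratio_near_resonant_ge[OF \<alpha>2 \<rho> \<mu>] by blast
  have "\<exists>k \<in> UNIV. C < bilinear_ratio \<alpha>1 \<alpha>2 s (fst k) (snd k)"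
  proof (rule ex_gt_of_powr_lower_bound[OF c])
    show "0 < (\<mu> - 1) / 2 - s" using s by simp
    fix N :: nat
    obtain n m :: int where "N \<le> n" "0 < n" "\<bar>m - n * \<rho>\<bar> \<le> n powr (1 - \<mu>)"
      using approx by blast
    with lower show "\<exists>x \<ge> real N. \<exists>k \<in> UNIV. c * x powr ((\<mu> - 1) / 2 - s)
        \<le> bilinear_ratio \<alpha>1 \<alpha>2 s (fst k) (snd k)"
      by (intro exI[of _ "real_of_int n"] conjI bexI[of _ "(3 * n + m, 3 * n - m)"]) auto
  qed
  then show ?thesis by auto
qed

section \<open>Rational approximations and the irrationality exponent\<close>

definition good_approx :: "real \<Rightarrow> real \<Rightarrow> (int \<times> int) set" where
  "good_approx \<rho> \<mu> = {(m, n). n \<noteq> 0 \<and> 0 < \<bar>\<rho> - real_of_int m / real_of_int n\<bar> \<and>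
      \<bar>\<rho> - real_of_int m / real_of_int n\<bar> < \<bar>real_of_int n\<bar> powr (- \<mu>)}"

lemma irr_exp_good_approx: "irr_exp \<rho> = Sup {ereal \<mu> | \<mu>. infinite (good_approx \<rho> \<mu>)}"
  unfolding irr_exp_def good_approx_def by simp

lemma finite_good_approx_bounded_denominator:
  fixes \<rho> \<mu> :: real
  assumes "0 \<le> \<mu>"
  shows "finite {(m, n) \<in> good_approx \<rho> \<mu>. \<bar>n\<bar> \<le> N}"
proof -
  define M where "M = \<lceil>(\<bar>\<rho>\<bar> + 1) * real_of_int \<bar>N\<bar>\<rceil>"
  have "{(m, n) \<in> good_approx \<rho> \<mu>. \<bar>n\<bar> \<le> N} \<subseteq> {-M..M} \<times> {-\<bar>N\<bar>..\<bar>N\<bar>}"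
  proof safe
    fix m n assume mn: "(m, n) \<in> good_approx \<rho> \<mu>" and nN: "\<bar>n\<bar> \<le> N"
    have n: "1 \<le> \<bar>real_of_int n\<bar>" using mn by (auto simp: good_approx_def)
    have "\<bar>\<rho> - real_of_int m / real_of_int n\<bar> < \<bar>real_of_int n\<bar> powr (- \<mu>)"
      using mn by (simp add: good_approx_def)
    also have "\<dots> \<le> 1"
      using n assms by (simp add: powr_minus_divide ge_one_powr_ge_zero)
    finally have "\<bar>real_of_int m / real_of_int n\<bar> \<le> \<bar>\<rho>\<bar> + 1"
      by linarith
    then have "\<bar>real_of_int m\<bar> \<le> (\<bar>\<rho>\<bar> + 1) * \<bar>real_of_int n\<bar>"
      using n by (simp add: abs_div divide_le_eq)
    also have "\<dots> \<le> (\<bar>\<rho>\<bar> + 1) * real_of_int \<bar>N\<bar>"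
      using nN by (intro mult_left_mono) auto
    finally show "m \<in> {-M..M}" unfolding M_def by (simp add: abs_le_iff) linarith
    show "n \<in> {-\<bar>N\<bar>..\<bar>N\<bar>}" using nN by auto
  qed
  then show ?thesis by (rule finite_subset) auto
qed

lemma approx_of_less_irr_exp:
  fixes \<rho> \<mu> :: real
  assumes "ereal \<mu> < irr_exp \<rho>" "0 \<le> \<mu>"
  shows "\<exists>(n::int) (m::int). int N \<le> n \<and> 0 < n \<and> \<bar>m - n * \<rho>\<bar> \<le> n powr (1 - \<mu>)"
proof -
  obtain \<mu>' where inf: "infinite (good_approx \<rho> \<mu>')" and "\<mu> < \<mu>'"
    using assms(1) unfolding irr_exp_good_approx less_Sup_iff by auto
  have "infinite (good_approx \<rho> \<mu>' - {(m, n) \<in> good_approx \<rho> \<mu>'. \<bar>n\<bar> \<le> int N})"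
    using finite_good_approx_bounded_denominator \<open>\<mu> < \<mu>'\<close> assms(2) inf
    by (simp add: Diff_infinite_finite)
  then obtain x where "x \<in> good_approx \<rho> \<mu>' - {(m, n) \<in> good_approx \<rho> \<mu>'. \<bar>n\<bar> \<le> int N}"
    using infinite_imp_nonempty by blast
  then obtain m n where mn: "(m, n) \<in> good_approx \<rho> \<mu>'" and nN: "int N < \<bar>n\<bar>"
    by (cases x) auto
  have n: "n \<noteq> 0" "1 \<le> \<bar>real_of_int n\<bar>" using mn by (auto simp: good_approx_def)
  have "\<bar>real_of_int m - real_of_int n * \<rho>\<bar> = \<bar>real_of_int n\<bar> * \<bar>\<rho> - real_of_int m / real_of_int n\<bar>"
    using n by (simp add: abs_mult[symmetric] algebra_simps)
  also have "\<dots> \<le> \<bar>real_of_int n\<bar> * \<bar>real_of_int n\<bar> powr (- \<mu>')"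
    using mn by (intro mult_left_mono) (auto simp: good_approx_def)
  also have "\<dots> \<le> \<bar>real_of_int n\<bar> * \<bar>real_of_int n\<bar> powr (- \<mu>)"
    using n \<open>\<mu> < \<mu>'\<close> by (simp add: powr_mono)
  also have "\<dots> = \<bar>real_of_int n\<bar> powr (1 - \<mu>)"
    using n by (simp add: powr_diff powr_minus divide_inverse)
  finally have approx: "\<bar>real_of_int m - real_of_int n * \<rho>\<bar> \<le> \<bar>real_of_int n\<bar> powr (1 - \<mu>)" .
  show ?thesis
  proof (cases "0 < n")
    case True
    then show ?thesis using approx nN by (intro exI[of _ n] exI[of _ m]) auto
  next
    case False
    have "\<bar>real_of_int (- m) - real_of_int (- n) * \<rho>\<bar> = \<bar>real_of_int m - real_of_int n * \<rho>\<bar>"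
      by (simp add: abs_minus_commute algebra_simps)
    then show ?thesis using approx nN n False by (intro exI[of _ "- n"] exI[of _ "- m"]) auto
  qed
qed

lemma irr_exp_ge_if_infinite: "infinite (good_approx \<rho> \<mu>) \<Longrightarrow> ereal \<mu> \<le> irr_exp \<rho>"
  unfolding irr_exp_good_approx by (rule Sup_upper) blast

lemma irr_exp_ge_2:
  assumes "\<rho> \<notin> \<rat>"
  shows "2 \<le> irr_exp \<rho>"
proof -
  have "approx_set \<rho> \<subseteq> good_approx \<rho> 2"
  proof
    fix x assume "x \<in> approx_set \<rho>"
    then obtain h k where x: "x = (h, k)" "k > 0" "\<bar>\<rho> - of_int h / of_int k\<bar> < 1 / real_of_int (k\<^sup>2)"
      unfolding approx_set_def by blast
    have "\<rho> \<noteq> of_int h / of_int k"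
      using assms by auto
    moreover have "\<bar>real_of_int k\<bar> powr (-2) = 1 / (real_of_int k)\<^sup>2"
      using x(2) by (simp add: powr_minus powr_realpow divide_simps)
    ultimately show "x \<in> good_approx \<rho> 2"
      using x by (simp add: good_approx_def)
  qed
  moreover have "infinite (approx_set \<rho>)"
    using assms rational_iff_finite_approx_set by blast
  ultimately have "infinite (good_approx \<rho> 2)"
    using finite_subset by blast
  then show ?thesis
    using irr_exp_ge_if_infinite by fastforce
qed

text \<open>A good approximation m/n \<noteq> p/q satisfies 1/(q |n|) \<le> |p/q - m/n| < |n|^(-\<mu>).\<close>
lemma good_approx_rat_denominator_less:
  fixes p q :: int
  assumes "0 < q" "1 < \<mu>" "(m, n) \<in> good_approx (p / q) \<mu>"
  shows "\<bar>real_of_int n\<bar> < real_of_int q powr (1 / (\<mu> - 1))"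
proof -
  define z where "z = p * n - q * m"
  define a where "a = \<bar>real_of_int n\<bar>"
  have n: "n \<noteq> 0" "1 \<le> a" using assms(3) by (auto simp: good_approx_def a_def)
  have eq: "p / q - m / n = real_of_int z / (real_of_int q * real_of_int n)"
    using assms(1) n by (simp add: z_def field_simps)
  then have "z \<noteq> 0" using assms(3) by (auto simp: good_approx_def)
  have "1 / (real_of_int q * a) \<le> \<bar>real_of_int z\<bar> / (real_of_int q * a)"
    using \<open>z \<noteq> 0\<close> n assms(1) by (simp add: divide_right_mono)
  also have "\<dots> = \<bar>p / q - m / n\<bar>"
    unfolding eq a_def using assms(1) by (simp add: abs_mult)
  also have "\<dots> < a powr (- \<mu>)"
    using assms(3) by (simp add: good_approx_def a_def)
  finally have "a powr (\<mu> - 1) < real_of_int q"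
    using n assms(1) by (simp add: powr_diff powr_minus field_simps)
  then have "(a powr (\<mu> - 1)) powr (1 / (\<mu> - 1)) < real_of_int q powr (1 / (\<mu> - 1))"
    using assms(2) n by (intro powr_less_mono2) auto
  then show ?thesis
    using assms(2) n by (simp add: powr_powr a_def)
qed

lemma infinite_good_approx_rat:
  fixes p q :: int
  assumes "0 < q" "\<mu> < 1"
  shows "infinite (good_approx (p / q) \<mu>)"
proof -
  define f where "f t = (p * int t + 1, q * int t)" for t :: nat
  have "inj_on f {2..}"
    unfolding f_def inj_on_def using assms(1) by auto
  then have "infinite (f ` {2..})"
    using finite_imageD infinite_Ici by blast
  moreover have "f ` {2..} \<subseteq> good_approx (p / q) \<mu>"
  proof (rule image_subsetI)
    fix t :: nat assume t: "t \<in> {2..}"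
    define a where "a = real_of_int q * real t"
    have "1 * 2 \<le> a"
      unfolding a_def using assms(1) t by (intro mult_mono) auto
    then have "a powr \<mu> < a"
      using assms(2) powr_less_mono[of \<mu> 1 a] by simp
    then have "1 / a < 1 / a powr \<mu>"
      using \<open>1 * 2 \<le> a\<close> by (intro divide_strict_left_mono) auto
    then have "1 / a < \<bar>real_of_int (q * int t)\<bar> powr (- \<mu>)"
      using assms(1) \<open>1 * 2 \<le> a\<close> by (simp add: a_def powr_minus divide_inverse)
    moreover have "p / q - real_of_int (p * int t + 1) / real_of_int (q * int t) = - (1 / a)"
      using assms(1) t by (simp add: a_def field_simps)
    moreover have "1 / a \<noteq> 0"
      using \<open>1 * 2 \<le> a\<close> by simp
    ultimately show "f t \<in> good_approx (p / q) \<mu>"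
      using assms(1) t \<open>1 * 2 \<le> a\<close> by (auto simp: good_approx_def f_def)
  qed
  ultimately show ?thesis
    using finite_subset by blast
qed

lemma irr_exp_Rats:
  assumes "\<rho> \<in> \<rat>"
  shows "irr_exp \<rho> = 1"
proof -
  obtain p q :: int where q: "0 < q" and \<rho>: "\<rho> = p / q"
    using assms Rats_cases' by metis
  show ?thesis
  proof (rule antisym)
    show "irr_exp \<rho> \<le> 1"
      unfolding irr_exp_good_approx
    proof (rule Sup_least, clarify)
      fix \<mu> assume inf: "infinite (good_approx \<rho> \<mu>)"
      show "ereal \<mu> \<le> 1"
      proof (rule ccontr)
        assume "\<not> ereal \<mu> \<le> 1"
        then have "1 < \<mu>" by simp
        define N where "N = \<lceil>real_of_int q powr (1 / (\<mu> - 1))\<rceil>"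
        have "good_approx \<rho> \<mu> \<subseteq> {(m, n) \<in> good_approx \<rho> \<mu>. \<bar>n\<bar> \<le> N}"
        proof safe
          fix m n assume "(m, n) \<in> good_approx \<rho> \<mu>"
          then have "real_of_int \<bar>n\<bar> < real_of_int q powr (1 / (\<mu> - 1))"
            using good_approx_rat_denominator_less[OF q \<open>1 < \<mu>\<close>] \<rho> by simp
          then show "\<bar>n\<bar> \<le> N"
            unfolding N_def by linarith
        qed
        moreover have "finite {(m, n) \<in> good_approx \<rho> \<mu>. \<bar>n\<bar> \<le> N}"
          using \<open>1 < \<mu>\<close> by (intro finite_good_approx_bounded_denominator) simp
        ultimately show False
          using inf finite_subset by blast
      qed
    qed
    show "1 \<le> irr_exp \<rho>"
    proof (rule dense_le)
      fix y :: ereal assume "y < 1"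
      then show "y \<le> irr_exp \<rho>"
        using irr_exp_ge_if_infinite[OF infinite_good_approx_rat[OF q]] unfolding \<rho>
        by (cases y) auto
    qed
  qed
qed

lemma Rats_ex_multiple_int:
  fixes \<rho> :: real
  assumes "\<rho> \<in> \<rat>"
  shows "\<exists>(n::int) (m::int). int N \<le> n \<and> 0 < n \<and> real_of_int m = real_of_int n * \<rho>"
proof -
  obtain p q :: int where q: "0 < q" and \<rho>: "\<rho> = p / q"
    using assms Rats_cases' by metis
  have "int N + 1 \<le> q * (int N + 1)"
    using mult_right_mono[of 1 q "int N + 1"] q by simp
  then have "int N \<le> q * (int N + 1)" "0 < q * (int N + 1)"
    by linarith+
  moreover have "real_of_int (p * (int N + 1)) = real_of_int (q * (int N + 1)) * \<rho>"
    using q by (simp add: \<rho>)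
  ultimately show ?thesis
    by blast
qed

lemma approx_exponent_of_less_s_r:
  fixes r s :: real
  assumes "1/4 \<le> r" "s < s_r r"
  obtains \<mu> where "1 \<le> \<mu>" "\<mu> \<le> 3" "s < (\<mu> - 1) / 2"
    and "\<And>N::nat. \<exists>(n::int) (m::int). int N \<le> n \<and> 0 < n \<and>
           \<bar>m - n * sqrt (12 * r - 3)\<bar> \<le> n powr (1 - \<mu>)"
proof (cases "sqrt (12 * r - 3) \<in> \<rat>")
  case True
  then have "s_r r = 1"
    using irr_exp_Rats[OF True] by (simp add: s_r_def sigma_r_def)
  moreover have "\<exists>(n::int) (m::int). int N \<le> n \<and> 0 < n \<and>
      \<bar>m - n * sqrt (12 * r - 3)\<bar> \<le> n powr (1 - 3)" for N :: nat
  proof -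
    obtain n m :: int where "int N \<le> n" "0 < n" "real_of_int m = real_of_int n * sqrt (12 * r - 3)"
      using Rats_ex_multiple_int[OF True] by blast
    then show ?thesis
      by (intro exI[of _ n] exI[of _ m]) simp
  qed
  ultimately show ?thesis
    using assms(2) that[of 3] by simp
next
  case False
  define \<sigma> where "\<sigma> = irr_exp (sqrt (12 * r - 3))"
  have \<sigma>: "2 \<le> \<sigma>" "sigma_r r = \<sigma>"
    using irr_exp_ge_2[OF False] by (simp_all add: \<sigma>_def sigma_r_def)
  have "ereal (max 1 (2 * s + 1)) < min 3 \<sigma>"
  proof (cases "3 \<le> \<sigma>")
    case True
    then have "s_r r = 1" using \<sigma> by (simp add: s_r_def)
    then show ?thesis using assms(2) True \<sigma> by (auto simp: min_def)
  next
    case False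
    then obtain \<sigma>' where \<sigma>': "\<sigma> = ereal \<sigma>'" "2 \<le> \<sigma>'" "\<sigma>' < 3"
      using \<sigma> by (cases \<sigma>) auto
    then have "s_r r = (\<sigma>' - 1) / 2" using \<sigma> by (simp add: s_r_def)
    then show ?thesis using assms(2) \<sigma>' by (auto simp: min_def)
  qed
  then obtain \<mu> where \<mu>: "max 1 (2 * s + 1) < \<mu>" "ereal \<mu> < min 3 \<sigma>"
    using ereal_dense2 by (metis less_ereal.simps(1))
  show ?thesis
  proof (rule that)
    show "1 \<le> \<mu>" "\<mu> \<le> 3" "s < (\<mu> - 1) / 2"
      using \<mu> by auto
    show "\<exists>(n::int) (m::int). int N \<le> n \<and> 0 < n \<and> \<bar>m - n * sqrt (12 * r - 3)\<bar> \<le> n powr (1 - \<mu>)"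
      for N using \<mu> by (intro approx_of_less_irr_exp) (auto simp: \<sigma>_def)
  qed
qed

lemma bilinear_ratio_unbounded_zero_mode:
  "\<exists>k. k \<noteq> 0 \<and> C < bilinear_ratio \<alpha> \<alpha> s 0 k \<and> C < bilinear_ratio \<alpha> \<alpha> s k 0"
proof -
  obtain N :: nat where "C < real N"
    using reals_Archimedean2 by blast
  then show ?thesis
    by (intro exI[of _ "int N + 1"]) (simp add: bilinear_ratio_zero_left bilinear_ratio_zero_right)
qed

lemma bilinear_ratio_unbounded_of_less_s_r:
  assumes "\<alpha>1 \<noteq> 0" "1/4 \<le> \<alpha>2 / \<alpha>1" "\<alpha>2 / \<alpha>1 \<noteq> 1" "s < s_r (\<alpha>2 / \<alpha>1)"
  shows "\<exists>k1 k2. C < bilinear_ratio \<alpha>1 \<alpha>2 s k1 k2"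
proof -
  define \<rho> where "\<rho> = sqrt (12 * (\<alpha>2 / \<alpha>1) - 3)"
  have \<rho>2: "\<rho>\<^sup>2 = 12 * (\<alpha>2 / \<alpha>1) - 3"
    using assms(2) by (simp add: \<rho>_def)
  then have \<alpha>2: "\<alpha>2 = \<alpha>1 * ((\<rho>\<^sup>2 + 3) / 12)"
    using assms(1) by simp
  have \<rho>: "0 \<le> \<rho>" "\<rho> \<noteq> 3"
  proof -
    show "0 \<le> \<rho>" using assms(2) by (simp add: \<rho>_def)
    show "\<rho> \<noteq> 3"
    proof
      assume "\<rho> = 3"
      with \<rho>2 have "\<alpha>2 / \<alpha>1 = 1"
        by (simp only: power2_eq_square)
      with assms(3) show False ..
    qed
  qed
  obtain \<mu> where "1 \<le> \<mu>" "\<mu> \<le> 3" "s < (\<mu> - 1) / 2"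
    "\<And>N::nat. \<exists>(n::int) (m::int). int N \<le> n \<and> 0 < n \<and> \<bar>m - n * \<rho>\<bar> \<le> n powr (1 - \<mu>)"
    using approx_exponent_of_less_s_r[OF assms(2,4)] unfolding \<rho>_def by blast
  then show ?thesis
    by (rule bilinear_ratio_unbounded_of_approx[OF \<alpha>2 \<rho>])
qed

theorem proposition4p1:
  fixes \<alpha>1 \<alpha>2 r b s :: real
  assumes "\<alpha>1 \<noteq> 0" and "\<alpha>2 \<noteq> 0" and "r = \<alpha>2 / \<alpha>1"
  shows "(r < 1/4 \<and> s < -1/2 \<longrightarrow>
            \<not> bilinear_est \<alpha>1 \<alpha>2 s b (\<lambda>_. True) (\<lambda>_. True))
       \<and> (r = 1 \<and> s < -1/2 \<longrightarrow>
            \<not> bilinear_est \<alpha>1 \<alpha>2 s b (\<lambda>F. F 0 = (\<lambda>_. 0)) (\<lambda>G. G 0 = (\<lambda>_. 0)))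
       \<and> (r = 1 \<longrightarrow>
            \<not> bilinear_est \<alpha>1 \<alpha>2 s b (\<lambda>_. True) (\<lambda>G. G 0 = (\<lambda>_. 0))
          \<and> \<not> bilinear_est \<alpha>1 \<alpha>2 s b (\<lambda>F. F 0 = (\<lambda>_. 0)) (\<lambda>_. True))
       \<and> (1/4 \<le> r \<and> r \<noteq> 1 \<and> s < s_r r \<longrightarrow>
            \<not> bilinear_est \<alpha>1 \<alpha>2 s b (\<lambda>_. True) (\<lambda>_. True))"
proof -
  have not_est: "\<not> bilinear_est \<alpha>1 \<alpha>2 s b P1 P2"
    if "\<And>C. \<exists>k1 k2. (\<forall>a. P1 (bump_mode k1 a)) \<and> (\<forall>a. P2 (bump_mode k2 a))
                      \<and> C < bilinear_ratio \<alpha>1 \<alpha>2 s k1 k2" for P1 P2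
    using bilinear_est_imp_ratio_bounded that by (meson not_le)
  have r1: "\<alpha>2 = \<alpha>1" if "r = 1"
    using assms that by simp
  show ?thesis
  proof (intro conjI impI)
    show "\<not> bilinear_est \<alpha>1 \<alpha>2 s b (\<lambda>_. True) (\<lambda>_. True)" if "r < 1/4 \<and> s < -1/2"
      using bilinear_ratio_unbounded_nonzero_modes that by (intro not_est) blast
    show "\<not> bilinear_est \<alpha>1 \<alpha>2 s b (\<lambda>F. F 0 = (\<lambda>_. 0)) (\<lambda>G. G 0 = (\<lambda>_. 0))"
      if "r = 1 \<and> s < -1/2"
      using bilinear_ratio_unbounded_nonzero_modes that bump_mode_other by (intro not_est) metis
    show "\<not> bilinear_est \<alpha>1 \<alpha>2 s b (\<lambda>_. True) (\<lambda>G. G 0 = (\<lambda>_. 0))" if "r = 1"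
      using bilinear_ratio_unbounded_zero_mode r1[OF that] bump_mode_other by (intro not_est) metis
    show "\<not> bilinear_est \<alpha>1 \<alpha>2 s b (\<lambda>F. F 0 = (\<lambda>_. 0)) (\<lambda>_. True)" if "r = 1"
      using bilinear_ratio_unbounded_zero_mode r1[OF that] bump_mode_other by (intro not_est) metis
    show "\<not> bilinear_est \<alpha>1 \<alpha>2 s b (\<lambda>_. True) (\<lambda>_. True)" if "1/4 \<le> r \<and> r \<noteq> 1 \<and> s < s_r r"
      using bilinear_ratio_unbounded_of_less_s_r[OF assms(1)] that assms(3) by (intro not_est) blast
  qed
qed

end
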